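(* Let $\mathcal X,\mathcal U$ be finite nonempty sets, $f:\mathcal X\times\mathcal U\to\mathcal X$ and $g:\mathcal X\to\mathbb R$. Then for all $x\in\mathcal X$, $$\max_{\pi\in\Pi}\min_{\tau\in\mathbb N} g(\xi_x^\pi(\tau))=\max_{\mathbf u\in\mathbb U}\min_{\tau\in\mathbb N} g(\xi_x^{\mathbf u}(\tau)).$$
   Context: $\mathbb N=\{0,1,\dots\}$; $\Pi$ is the set of maps $\mathcal X\to\mathcal U$; $\mathbb U$ is the set of sequences $\mathbb N\to\mathcal U$. For $\pi\in\Pi$: $\xi_x^\pi(0)=x$, $\xi_x^\pi(t+1)=f(\xi_x^\pi(t),\pi(\xi_x^\pi(t)))$. For $\mathbf u\in\mathbb U$: $\xi_x^{\mathbf u}(0)=x$, $\xi_x^{\mathbf u}(t+1)=f(\xi_x^{\mathbf u}(t),\mathbf u(t))$. *)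

theory Defs
  imports "HOL-Analysis.Analysis"
begin

primrec traj_pol :: "('x \<Rightarrow> 'u \<Rightarrow> 'x) \<Rightarrow> ('x \<Rightarrow> 'u) \<Rightarrow> 'x \<Rightarrow> nat \<Rightarrow> 'x" where
  "traj_pol f p x 0 = x"
| "traj_pol f p x (Suc t) = f (traj_pol f p x t) (p (traj_pol f p x t))"

primrec traj_seq :: "('x \<Rightarrow> 'u \<Rightarrow> 'x) \<Rightarrow> (nat \<Rightarrow> 'u) \<Rightarrow> 'x \<Rightarrow> nat \<Rightarrow> 'x" where
  "traj_seq f u x 0 = x"
| "traj_seq f u x (Suc t) = f (traj_seq f u x t) (u t)"

text \<open>min over tau in N of g along a trajectory (range is finite since 'x is finite).\<close>
definition val_pol :: "('x::finite \<Rightarrow> 'u \<Rightarrow> 'x) \<Rightarrow> ('x \<Rightarrow> real) \<Rightarrow> ('x \<Rightarrow> 'u) \<Rightarrow> 'x \<Rightarrow> real" where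
  "val_pol f g p x = Min (range (\<lambda>\<tau>. g (traj_pol f p x \<tau>)))"

definition val_seq :: "('x::finite \<Rightarrow> 'u \<Rightarrow> 'x) \<Rightarrow> ('x \<Rightarrow> real) \<Rightarrow> (nat \<Rightarrow> 'u) \<Rightarrow> 'x \<Rightarrow> real" where
  "val_seq f g u x = Min (range (\<lambda>\<tau>. g (traj_seq f u x \<tau>)))"

end

theory Submission
  imports Defs
begin

text \<open>Fix a level c. The states from which some input sequence keeps g at least c forever
  form a set that contains a good successor of each of its states; a stationary policy
  choosing such a successor never leaves the set, so it reaches level c as well. Conversely,
  every policy is reproduced by the input sequence it generates along its own trajectory.
  Since there are only finitely many policies, the best policy value is attained and is
  therefore the best value of input sequences too.\<close>

lemma traj_seq_Suc_shift:
  "traj_seq f w y (Suc t) = traj_seq f (\<lambda>t. w (Suc t)) (f y (w 0)) t"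
  by (induction t) auto

lemma traj_seq_feedback:
  "traj_seq f (\<lambda>t. p (traj_pol f p x t)) x = traj_pol f p x"
proof
  show "traj_seq f (\<lambda>t. p (traj_pol f p x t)) x t = traj_pol f p x t" for t
    by (induction t) auto
qed

lemma traj_pol_invariant:
  assumes "x \<in> S" and "\<And>y. y \<in> S \<Longrightarrow> f y (p y) \<in> S"
  shows "traj_pol f p x t \<in> S"
  using assms by (induction t) auto

lemma finite_range_comp_finite:
  fixes g :: "'x::finite \<Rightarrow> 'b"
  shows "finite (range (\<lambda>t. g (h t)))"
  by (rule finite_subset[of _ "range g"]) auto

lemma le_val_pol_iff: "c \<le> val_pol f g p x \<longleftrightarrow> (\<forall>t. c \<le> g (traj_pol f p x t))"
  unfolding val_pol_def by (simp add: finite_range_comp_finite)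

lemma le_val_seq_iff: "c \<le> val_seq f g u x \<longleftrightarrow> (\<forall>t. c \<le> g (traj_seq f u x t))"
  unfolding val_seq_def by (simp add: finite_range_comp_finite)

lemma val_seq_feedback: "val_seq f g (\<lambda>t. p (traj_pol f p x t)) x = val_pol f g p x"
  unfolding val_seq_def val_pol_def traj_seq_feedback ..

definition viability_kernel :: "('x \<Rightarrow> 'u \<Rightarrow> 'x) \<Rightarrow> ('x \<Rightarrow> 'b::order) \<Rightarrow> 'b \<Rightarrow> 'x set" where
  "viability_kernel f g c = {y. \<exists>w. \<forall>t. c \<le> g (traj_seq f w y t)}"

lemma viability_kernel_le:
  assumes "y \<in> viability_kernel f g c"
  shows "c \<le> g y"
proof -
  from assms obtain w where "\<forall>t. c \<le> g (traj_seq f w y t)"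
    unfolding viability_kernel_def by blast
  then show ?thesis
    by (metis traj_seq.simps(1))
qed

lemma viability_kernel_successor:
  assumes "y \<in> viability_kernel f g c"
  shows "\<exists>a. f y a \<in> viability_kernel f g c"
proof -
  from assms obtain w where "\<forall>t. c \<le> g (traj_seq f w y t)"
    unfolding viability_kernel_def by blast
  then have "\<forall>t. c \<le> g (traj_seq f (\<lambda>t. w (Suc t)) (f y (w 0)) t)"
    by (metis traj_seq_Suc_shift)
  then show ?thesis
    unfolding viability_kernel_def by blast
qed

lemma viability_kernel_feedback:
  obtains p where "\<And>y. y \<in> viability_kernel f g c \<Longrightarrow> f y (p y) \<in> viability_kernel f g c"
  using viability_kernel_successor someI_ex by metis

lemma val_seq_le_val_pol:
  fixes f :: "'x::finite \<Rightarrow> 'u \<Rightarrow> 'x"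
  shows "\<exists>p. val_seq f g u x \<le> val_pol f g p x"
proof -
  let ?K = "viability_kernel f g (val_seq f g u x)"
  have "x \<in> ?K"
    unfolding viability_kernel_def using le_val_seq_iff by blast
  moreover obtain p where "\<And>y. y \<in> ?K \<Longrightarrow> f y (p y) \<in> ?K"
    using viability_kernel_feedback by blast
  ultimately have "\<forall>t. traj_pol f p x t \<in> ?K"
    using traj_pol_invariant by metis
  then have "val_seq f g u x \<le> val_pol f g p x"
    unfolding le_val_pol_iff by (blast intro: viability_kernel_le)
  then show ?thesis by blast
qed

theorem mainTheorem4:
  fixes f :: "'x::finite \<Rightarrow> 'u::finite \<Rightarrow> 'x" and g :: "'x \<Rightarrow> real" and x :: 'x
  shows "\<exists>v. (\<exists>p. val_pol f g p x = v) \<and> (\<forall>p. val_pol f g p x \<le> v)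
            \<and> (\<exists>u. val_seq f g u x = v) \<and> (\<forall>u. val_seq f g u x \<le> v)"
proof -
  define v where "v = Max (range (\<lambda>p. val_pol f g p x))"
  have pol_le: "val_pol f g p x \<le> v" for p
    unfolding v_def by (rule Max_ge) auto
  have "v \<in> range (\<lambda>p. val_pol f g p x)"
    unfolding v_def by (rule Max_in) auto
  then obtain p where p: "val_pol f g p x = v"
    by blast
  have "val_seq f g u x \<le> v" for u
    using val_seq_le_val_pol pol_le order.trans by metis
  then show ?thesis
    using p pol_le val_seq_feedback by metis
qed

end
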